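(* Let $(G,P)$ be a quasi-lattice ordered group and $\mathcal D$ the diagonal subalgebra of $\mathcal T(G,P)$. Then the commutant $\mathcal D'$ of $\mathcal D$ in $B(\ell^2(P))$ is contained in $\ell^\infty(P)$, i.e. every $M\in\mathcal D'$ is a multiplication operator $M_g$ for some $g\in\ell^\infty(P)$.
   Context: Quasi-lattice ordered group $(G,P)$: $G$ discrete, $P\subseteq G$ subsemigroup, $P\cap P^{-1}=\{e\}$, and for $x\le y\iff x^{-1}y\in P$ elements with a common upper bound in $P$ have a least one in $P$. On $\ell^2(P)$ with basis $\{\varepsilon_t\}_{t\in P}$, $T_s\varepsilon_t=\varepsilon_{st}$; $\mathcal T(G,P)$ is generated by the $T_s$, and $\mathcal D=\overline{\mathrm{span}}\{T_sT_s^*:s\in P\}$. $\ell^\infty(P)$ acts on $\ell^2(P)$ by multiplication operators $M_g\varepsilon_t=g(t)\varepsilon_t$. *)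

theory Defs
  imports "HOL-Analysis.Analysis"
begin

text \<open>The group G is the (discrete) type 'a of class group_add, written additively:
  e = 0, st = s + t, s^{-1} = -s.  The order is x \<le> y iff -x + y \<in> P.\<close>

definition qlo_le :: "'a::group_add set \<Rightarrow> 'a \<Rightarrow> 'a \<Rightarrow> bool" where
  "qlo_le P x y \<longleftrightarrow> -x + y \<in> P"

definition quasi_lattice_ordered :: "'a::group_add set \<Rightarrow> bool" where
  "quasi_lattice_ordered P \<longleftrightarrow>
     (\<forall>s\<in>P. \<forall>t\<in>P. s + t \<in> P) \<and>
     P \<inter> uminus ` P = {0} \<and>
     (\<forall>x y. (\<exists>z\<in>P. qlo_le P x z \<and> qlo_le P y z) \<longrightarrow>
        (\<exists>z\<in>P. qlo_le P x z \<and> qlo_le P y z \<and>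
           (\<forall>w\<in>P. qlo_le P x w \<and> qlo_le P y w \<longrightarrow> qlo_le P z w)))"

definition l2 :: "'a set \<Rightarrow> ('a \<Rightarrow> complex) set" where
  "l2 P = {f. (\<forall>t. t \<notin> P \<longrightarrow> f t = 0) \<and> (\<lambda>t. (cmod (f t))\<^sup>2) summable_on P}"

definition l2norm :: "'a set \<Rightarrow> ('a \<Rightarrow> complex) \<Rightarrow> real" where
  "l2norm P f = sqrt (infsum (\<lambda>t. (cmod (f t))\<^sup>2) P)"

text \<open>Bounded linear operators on \<ell>^2(P) (only their values on \<ell>^2(P) matter).\<close>
definition bounded_op :: "'a set \<Rightarrow> (('a \<Rightarrow> complex) \<Rightarrow> ('a \<Rightarrow> complex)) \<Rightarrow> bool" where
  "bounded_op P A \<longleftrightarrow>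
     (\<forall>f\<in>l2 P. A f \<in> l2 P) \<and>
     (\<forall>f\<in>l2 P. \<forall>g\<in>l2 P. \<forall>a b. A (\<lambda>t. a * f t + b * g t) = (\<lambda>t. a * A f t + b * A g t)) \<and>
     (\<exists>C. \<forall>f\<in>l2 P. l2norm P (A f) \<le> C * l2norm P f)"

definition op_norm :: "'a set \<Rightarrow> (('a \<Rightarrow> complex) \<Rightarrow> ('a \<Rightarrow> complex)) \<Rightarrow> real" where
  "op_norm P A = Sup {l2norm P (A f) | f. f \<in> l2 P \<and> l2norm P f \<le> 1}"

text \<open>Isometries T_s: T_s \<epsilon>_t = \<epsilon>_{st}, and their adjoints (T_s^* \<epsilon>_u = \<epsilon>_{s^{-1}u}
  if s^{-1}u \<in> P, else 0).\<close>
definition T_op :: "'a::group_add set \<Rightarrow> 'a \<Rightarrow> ('a \<Rightarrow> complex) \<Rightarrow> ('a \<Rightarrow> complex)" where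
  "T_op P s f = (\<lambda>t. if t \<in> P \<and> -s + t \<in> P then f (-s + t) else 0)"

definition T_adj :: "'a::group_add set \<Rightarrow> 'a \<Rightarrow> ('a \<Rightarrow> complex) \<Rightarrow> ('a \<Rightarrow> complex)" where
  "T_adj P s f = (\<lambda>t. if t \<in> P then f (s + t) else 0)"

text \<open>The diagonal algebra: norm closure of span of T_s T_s^*, s \<in> P.\<close>
definition diag_alg :: "'a::group_add set \<Rightarrow> (('a \<Rightarrow> complex) \<Rightarrow> ('a \<Rightarrow> complex)) set" where
  "diag_alg P = {A. bounded_op P A \<and>
     (\<forall>\<epsilon>>0. \<exists>F c. finite F \<and> F \<subseteq> P \<and>
        op_norm P (\<lambda>f t. A f t - (\<Sum>s\<in>F. c s * (T_op P s (T_adj P s f)) t)) < \<epsilon>)}"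

definition commutant :: "'a set \<Rightarrow> (('a \<Rightarrow> complex) \<Rightarrow> ('a \<Rightarrow> complex)) set
    \<Rightarrow> (('a \<Rightarrow> complex) \<Rightarrow> ('a \<Rightarrow> complex)) set" where
  "commutant P S = {M. bounded_op P M \<and> (\<forall>A\<in>S. \<forall>f\<in>l2 P. M (A f) = A (M f))}"

definition mult_op :: "('a \<Rightarrow> complex) \<Rightarrow> ('a \<Rightarrow> complex) \<Rightarrow> ('a \<Rightarrow> complex)" where
  "mult_op g f = (\<lambda>t. g t * f t)"

end

theory Submission
  imports Defs
begin

text \<open>The projections \<open>T\<^sub>s T\<^sub>s\<^sup>*\<close> lie in \<open>\<D>\<close> and are multiplication by the indicator of
  \<open>sP\<close>. An operator \<open>M\<close> commuting with them maps \<open>\<epsilon>\<^sub>v\<close> into \<open>vP\<close>; and for \<open>u \<noteq> v\<close> in \<open>vP\<close>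
  we have \<open>v \<notin> uP\<close> because \<open>P \<inter> P\<inverse> = {e}\<close>, so \<open>T\<^sub>u T\<^sub>u\<^sup>*\<close> kills \<open>\<epsilon>\<^sub>v\<close> and hence the
  \<open>u\<close>-coordinate of \<open>M \<epsilon>\<^sub>v\<close>. Thus \<open>M \<epsilon>\<^sub>v = g(v) \<epsilon>\<^sub>v\<close> with \<open>|g(v)| \<le> \<parallel>M\<parallel>\<close>, and \<open>M = M\<^sub>g\<close>
  follows by linearity on finitely supported vectors and continuity.\<close>

definition unit_vec :: "'a \<Rightarrow> 'a \<Rightarrow> complex" where
  "unit_vec v = (\<lambda>t. if t = v then 1 else 0)"

definition cutoff :: "'a set \<Rightarrow> ('a \<Rightarrow> complex) \<Rightarrow> 'a \<Rightarrow> complex" where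
  "cutoff F f = (\<lambda>t. if t \<in> F then f t else 0)"

lemma l2_vanishes_outside: "f \<in> l2 P \<Longrightarrow> t \<notin> P \<Longrightarrow> f t = 0"
  by (simp add: l2_def)

lemma l2norm_nonneg: "l2norm P f \<ge> 0"
  by (simp add: l2norm_def infsum_nonneg)

lemma l2_coord_le:
  assumes "f \<in> l2 P" "u \<in> P"
  shows "cmod (f u) \<le> l2norm P f"
proof -
  have s: "(\<lambda>t. (cmod (f t))\<^sup>2) summable_on P" using assms(1) by (simp add: l2_def)
  have "(cmod (f u))\<^sup>2 = infsum (\<lambda>t. (cmod (f t))\<^sup>2) {u}" by simp
  also have "\<dots> \<le> infsum (\<lambda>t. (cmod (f t))\<^sup>2) P"
    by (rule infsum_mono2) (use s assms(2) in auto)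
  finally show ?thesis unfolding l2norm_def by (simp add: real_le_rsqrt)
qed

lemma finite_support_in_l2:
  assumes "finite F" "F \<subseteq> P" "\<And>t. t \<notin> F \<Longrightarrow> h t = 0"
  shows "h \<in> l2 P"
proof -
  have "(\<lambda>t. (cmod (h t))\<^sup>2) summable_on P \<longleftrightarrow> (\<lambda>t. (cmod (h t))\<^sup>2) summable_on F"
    by (rule summable_on_cong_neutral) (use assms in auto)
  then show ?thesis using assms unfolding l2_def by auto
qed

lemma zero_in_l2: "(\<lambda>t. 0) \<in> l2 P"
  by (rule finite_support_in_l2[of "{}"]) auto

lemma unit_vec_in_l2: "v \<in> P \<Longrightarrow> unit_vec v \<in> l2 P"
  by (rule finite_support_in_l2[of "{v}"]) (auto simp: unit_vec_def)

lemma cutoff_in_l2: "finite F \<Longrightarrow> F \<subseteq> P \<Longrightarrow> cutoff F f \<in> l2 P"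
  by (rule finite_support_in_l2[of F]) (auto simp: cutoff_def)

lemma l2norm_unit_vec:
  assumes "v \<in> P"
  shows "l2norm P (unit_vec v) = 1"
proof -
  have "infsum (\<lambda>t. (cmod (unit_vec v t))\<^sup>2) P = infsum (\<lambda>t. (cmod (unit_vec v t))\<^sup>2) {v}"
    by (rule infsum_cong_neutral) (use assms in \<open>auto simp: unit_vec_def\<close>)
  then show ?thesis by (simp add: l2norm_def unit_vec_def)
qed

lemma l2_dominated:
  assumes "f \<in> l2 P" "\<And>t. cmod (h t) \<le> cmod (f t)" "\<And>t. t \<notin> P \<Longrightarrow> h t = 0"
  shows "h \<in> l2 P" "l2norm P h \<le> l2norm P f"
proof -
  have s: "(\<lambda>t. (cmod (f t))\<^sup>2) summable_on P" using assms(1) by (simp add: l2_def)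
  have le: "(cmod (h t))\<^sup>2 \<le> (cmod (f t))\<^sup>2" for t
    using assms(2)[of t] by (simp add: power_mono)
  have s': "(\<lambda>t. (cmod (h t))\<^sup>2) summable_on P"
    by (rule summable_on_comparison_test[OF s]) (use le in auto)
  then show "h \<in> l2 P" using assms(3) by (simp add: l2_def)
  have "infsum (\<lambda>t. (cmod (h t))\<^sup>2) P \<le> infsum (\<lambda>t. (cmod (f t))\<^sup>2) P"
    by (rule infsum_mono[OF s' s]) (use le in auto)
  then show "l2norm P h \<le> l2norm P f" by (simp add: l2norm_def)
qed

lemma infsum_tail_small:
  fixes h :: "'a \<Rightarrow> real"
  assumes s: "h summable_on P" and e: "e > 0"
  shows "\<exists>X. finite X \<and> X \<subseteq> P \<and> (\<forall>Y. finite Y \<and> X \<subseteq> Y \<and> Y \<subseteq> P \<longrightarrow> infsum h (P - Y) < e)"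
proof -
  have "(sum h \<longlongrightarrow> infsum h P) (finite_subsets_at_top P)"
    using has_sum_infsum[OF s] by (simp add: has_sum_def)
  then have "eventually (\<lambda>Y. dist (sum h Y) (infsum h P) < e) (finite_subsets_at_top P)"
    using e tendsto_iff by blast
  then obtain X where X: "finite X" "X \<subseteq> P"
    "\<And>Y. finite Y \<and> X \<subseteq> Y \<and> Y \<subseteq> P \<Longrightarrow> dist (sum h Y) (infsum h P) < e"
    unfolding eventually_finite_subsets_at_top by blast
  have "infsum h (P - Y) < e" if "finite Y" "X \<subseteq> Y" "Y \<subseteq> P" for Y
  proof -
    have "infsum h (P - Y) = infsum h P - infsum h Y"
      by (rule infsum_Diff) (use s that in auto)
    then show ?thesis using X(3)[of Y] that by (simp add: dist_real_def)
  qed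
  then show ?thesis using X by blast
qed

lemma l2_cutoff_approx:
  assumes f: "f \<in> l2 P" and e: "e > 0" and X0: "finite X0" "X0 \<subseteq> P"
  shows "\<exists>Y. finite Y \<and> X0 \<subseteq> Y \<and> Y \<subseteq> P \<and> l2norm P (\<lambda>t. f t - cutoff Y f t) < e"
proof -
  have s: "(\<lambda>t. (cmod (f t))\<^sup>2) summable_on P" using f by (simp add: l2_def)
  obtain X where X: "finite X" "X \<subseteq> P"
    "\<And>Y. finite Y \<and> X \<subseteq> Y \<and> Y \<subseteq> P \<Longrightarrow> infsum (\<lambda>t. (cmod (f t))\<^sup>2) (P - Y) < e\<^sup>2"
    using infsum_tail_small[OF s, of "e\<^sup>2"] e by auto
  define Y where "Y = X0 \<union> X"
  have Y: "finite Y" "X0 \<subseteq> Y" "X \<subseteq> Y" "Y \<subseteq> P" using X X0 by (auto simp: Y_def)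
  have "infsum (\<lambda>t. (cmod (f t - cutoff Y f t))\<^sup>2) P = infsum (\<lambda>t. (cmod (f t))\<^sup>2) (P - Y)"
    by (rule infsum_cong_neutral) (auto simp: cutoff_def)
  then have "l2norm P (\<lambda>t. f t - cutoff Y f t) < e"
    using X(3)[of Y] Y e unfolding l2norm_def by (metis real_sqrt_less_mono real_sqrt_abs abs_of_pos)
  then show ?thesis using Y by blast
qed

lemma bounded_op_l2: "bounded_op P M \<Longrightarrow> f \<in> l2 P \<Longrightarrow> M f \<in> l2 P"
  by (simp add: bounded_op_def)

lemma bounded_op_lincomb:
  "bounded_op P M \<Longrightarrow> f \<in> l2 P \<Longrightarrow> h \<in> l2 P \<Longrightarrow>
    M (\<lambda>t. a * f t + b * h t) = (\<lambda>t. a * M f t + b * M h t)"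
  by (simp add: bounded_op_def)

lemma bounded_op_diff:
  assumes "bounded_op P M" "f \<in> l2 P" "h \<in> l2 P"
  shows "M (\<lambda>t. f t - h t) = (\<lambda>t. M f t - M h t)"
  using bounded_op_lincomb[OF assms, of 1 "-1"] by simp

lemma bounded_op_zero:
  assumes "bounded_op P M"
  shows "M (\<lambda>t. 0) = (\<lambda>t. 0)"
  using bounded_op_lincomb[OF assms zero_in_l2 zero_in_l2, of 0 0] by simp

lemma bounded_op_pos_bound:
  assumes "bounded_op P M"
  shows "\<exists>C>0. \<forall>f\<in>l2 P. l2norm P (M f) \<le> C * l2norm P f"
proof -
  obtain C where C: "\<forall>f\<in>l2 P. l2norm P (M f) \<le> C * l2norm P f"
    using assms unfolding bounded_op_def by blast
  have "C * l2norm P f \<le> (\<bar>C\<bar> + 1) * l2norm P f" for f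
    by (intro mult_right_mono l2norm_nonneg) auto
  then show ?thesis using C by (intro exI[of _ "\<bar>C\<bar> + 1"]) (auto intro: order_trans)
qed

lemma bounded_op_mult_op:
  assumes "\<And>t. cmod (h t) \<le> 1"
  shows "bounded_op P (mult_op h)"
  unfolding bounded_op_def
proof (intro conjI ballI allI)
  have dom: "cmod (mult_op h f t) \<le> cmod (f t)" for f t
    using assms[of t] by (simp add: mult_op_def norm_mult mult_left_le_one_le)
  fix f assume f: "f \<in> l2 P"
  show "mult_op h f \<in> l2 P"
    by (rule l2_dominated(1)[OF f dom[of f]]) (simp add: mult_op_def l2_vanishes_outside[OF f])
next
  fix f g a b
  show "mult_op h (\<lambda>t. a * f t + b * g t) = (\<lambda>t. a * mult_op h f t + b * mult_op h g t)"
    by (auto simp: mult_op_def algebra_simps)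
next
  have "l2norm P (mult_op h f) \<le> 1 * l2norm P f" if "f \<in> l2 P" for f
    using assms that
    by (simp, intro l2_dominated(2))
       (auto simp: mult_op_def norm_mult mult_left_le_one_le l2_vanishes_outside)
  then show "\<exists>C. \<forall>f\<in>l2 P. l2norm P (mult_op h f) \<le> C * l2norm P f" by blast
qed

lemma op_norm_zero: "op_norm P (\<lambda>f t. 0) = 0"
proof -
  have "{l2norm P ((\<lambda>f t. 0::complex) f) | f. f \<in> l2 P \<and> l2norm P f \<le> 1} = {0}"
    using zero_in_l2[of P] by (auto simp: l2norm_def)
  then show ?thesis by (simp add: op_norm_def)
qed

lemma bounded_op_diagonal_on_cutoff:
  assumes M: "bounded_op P M"
    and diag: "\<And>v. v \<in> P \<Longrightarrow> M (unit_vec v) = mult_op g (unit_vec v)"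
    and F: "finite F" "F \<subseteq> P"
  shows "M (cutoff F f) = mult_op g (cutoff F f)"
  using F
proof (induction F rule: finite_induct)
  case empty
  have "cutoff {} f = (\<lambda>t. 0)" by (simp add: cutoff_def)
  then show ?case using bounded_op_zero[OF M] by (simp add: mult_op_def)
next
  case (insert v F)
  have vP: "v \<in> P" and FP: "F \<subseteq> P" using insert.prems by auto
  have split: "cutoff (insert v F) f = (\<lambda>t. 1 * cutoff F f t + f v * unit_vec v t)"
    using insert.hyps by (auto simp: cutoff_def unit_vec_def fun_eq_iff)
  have "M (cutoff (insert v F) f) = (\<lambda>t. 1 * M (cutoff F f) t + f v * M (unit_vec v) t)"
    unfolding split
    by (rule bounded_op_lincomb[OF M cutoff_in_l2[OF insert.hyps(1) FP] unit_vec_in_l2[OF vP]])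
  then show ?case unfolding insert.IH[OF FP] diag[OF vP]
    using insert.hyps by (auto simp: mult_op_def cutoff_def unit_vec_def fun_eq_iff)
qed

lemma bounded_op_diagonal_is_mult_op:
  assumes M: "bounded_op P M"
    and diag: "\<And>v. v \<in> P \<Longrightarrow> M (unit_vec v) = mult_op g (unit_vec v)"
    and f: "f \<in> l2 P"
  shows "M f = mult_op g f"
proof
  fix u
  show "M f u = mult_op g f u"
  proof (cases "u \<in> P")
    case False
    then show ?thesis using l2_vanishes_outside[OF bounded_op_l2[OF M f]] l2_vanishes_outside[OF f]
      by (simp add: mult_op_def)
  next
    case uP: True
    obtain C where C: "C > 0" "\<And>f. f \<in> l2 P \<Longrightarrow> l2norm P (M f) \<le> C * l2norm P f"
      using bounded_op_pos_bound[OF M] by blast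
    have "cmod (M f u - g u * f u) < e" if e: "e > 0" for e
    proof -
      obtain Y where Y: "finite Y" "u \<in> Y" "Y \<subseteq> P"
        and small: "l2norm P (\<lambda>t. f t - cutoff Y f t) < e / C"
        using l2_cutoff_approx[OF f, of "e / C" "{u}"] e C uP by auto
      define d where "d = (\<lambda>t. f t - cutoff Y f t)"
      have d: "d \<in> l2 P"
        by (rule l2_dominated(1)[OF f]) (auto simp: d_def cutoff_def l2_vanishes_outside[OF f])
      have Md: "M d = (\<lambda>t. M f t - M (cutoff Y f) t)"
        unfolding d_def by (rule bounded_op_diff[OF M f cutoff_in_l2[OF Y(1) Y(3)]])
      have "M (cutoff Y f) u = g u * f u"
        using bounded_op_diagonal_on_cutoff[OF M diag Y(1) Y(3)] Y(2)
        by (simp add: mult_op_def cutoff_def)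
      then have "cmod (M f u - g u * f u) = cmod (M d u)" by (simp add: Md)
      also have "\<dots> \<le> C * l2norm P d"
        using l2_coord_le[OF bounded_op_l2[OF M d] uP] C(2)[OF d] by linarith
      also have "\<dots> < C * (e / C)"
        using small C(1) by (intro mult_strict_left_mono) (simp_all add: d_def)
      finally show ?thesis using C(1) by simp
    qed
    then have "M f u - g u * f u = 0"
      by (metis norm_le_zero_iff not_less order_refl zero_less_norm_iff)
    then show ?thesis by (simp add: mult_op_def)
  qed
qed

definition range_proj :: "'a::group_add set \<Rightarrow> 'a \<Rightarrow> ('a \<Rightarrow> complex) \<Rightarrow> 'a \<Rightarrow> complex" where
  "range_proj P s = mult_op (\<lambda>t. if t \<in> P \<and> -s + t \<in> P then 1 else 0)"

lemma range_proj_eq_T_T_adj: "range_proj P s f = T_op P s (T_adj P s f)"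
  by (auto simp: range_proj_def mult_op_def T_op_def T_adj_def fun_eq_iff add.assoc[symmetric])

lemma range_proj_in_diag_alg:
  assumes "s \<in> P"
  shows "range_proj P s \<in> diag_alg P"
proof -
  have "bounded_op P (range_proj P s)"
    unfolding range_proj_def by (rule bounded_op_mult_op) simp
  moreover have "\<exists>F c. finite F \<and> F \<subseteq> P \<and>
      op_norm P (\<lambda>f t. range_proj P s f t - (\<Sum>s\<in>F. c s * T_op P s (T_adj P s f) t)) < e"
    if "e > 0" for e
    by (rule exI[of _ "{s}"], rule exI[of _ "\<lambda>_. 1"])
       (use assms that in \<open>simp add: range_proj_eq_T_T_adj op_norm_zero\<close>)
  ultimately show ?thesis by (simp add: diag_alg_def)
qed

lemma commutant_diag_alg_diagonal:
  fixes P :: "'a::group_add set"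
  assumes cone: "P \<inter> uminus ` P = {0}"
    and M: "M \<in> commutant P (diag_alg P)"
    and vP: "v \<in> P"
  shows "M (unit_vec v) = mult_op (\<lambda>t. M (unit_vec t) t) (unit_vec v)"
proof
  fix u
  have zP: "0 \<in> P" using cone by blast
  have Mb: "bounded_op P M" using M by (simp add: commutant_def)
  have comm: "M (range_proj P s (unit_vec v)) = range_proj P s (M (unit_vec v))" if "s \<in> P" for s
    using M range_proj_in_diag_alg[OF that] unit_vec_in_l2[OF vP] by (simp add: commutant_def)
  have "M (unit_vec v) u = 0" if uv: "u \<noteq> v"
  proof (cases "u \<in> P")
    case False
    then show ?thesis using l2_vanishes_outside[OF bounded_op_l2[OF Mb unit_vec_in_l2[OF vP]]] by blast
  next
    case uP: True
    show ?thesis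
    proof (cases "-v + u \<in> P")
      case False
      have "range_proj P v (unit_vec v) = unit_vec v"
        using vP zP by (auto simp: range_proj_def mult_op_def unit_vec_def fun_eq_iff)
      then have "M (unit_vec v) u = range_proj P v (M (unit_vec v)) u"
        using comm[OF vP] by (metis fun_cong)
      also have "\<dots> = 0" using False by (simp add: range_proj_def mult_op_def)
      finally show ?thesis .
    next
      case True
      have "-u + v \<notin> P"
      proof
        assume "-u + v \<in> P"
        then have "-v + u \<in> uminus ` P" by (metis image_eqI minus_add minus_minus)
        then have "-v + u = 0" using cone True by blast
        then show False using uv by (metis add_minus_cancel add.right_neutral)
      qed
      then have "range_proj P u (unit_vec v) = (\<lambda>t. 0)"
        by (auto simp: range_proj_def mult_op_def unit_vec_def fun_eq_iff)
      then have "range_proj P u (M (unit_vec v)) = (\<lambda>t. 0)"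
        using comm[OF uP] bounded_op_zero[OF Mb] by metis
      then have "range_proj P u (M (unit_vec v)) u = 0" by simp
      then show ?thesis using uP zP by (simp add: range_proj_def mult_op_def)
    qed
  qed
  then show "M (unit_vec v) u = mult_op (\<lambda>t. M (unit_vec t) t) (unit_vec v) u"
    by (cases "u = v") (auto simp: mult_op_def unit_vec_def)
qed

lemma bounded_op_diagonal_bounded:
  assumes "bounded_op P M"
  shows "\<exists>C. \<forall>t\<in>P. cmod (M (unit_vec t) t) \<le> C"
proof -
  obtain C where C: "\<And>f. f \<in> l2 P \<Longrightarrow> l2norm P (M f) \<le> C * l2norm P f"
    using assms unfolding bounded_op_def by blast
  have "cmod (M (unit_vec t) t) \<le> C" if "t \<in> P" for t
    using l2_coord_le[of "M (unit_vec t)" P t] C[of "unit_vec t"] assms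
      unit_vec_in_l2[OF that] l2norm_unit_vec[OF that] that
    by (simp add: bounded_op_def)
  then show ?thesis by blast
qed

theorem lemma6p11:
  fixes P :: "'a::group_add set"
  assumes "quasi_lattice_ordered P"
      and "M \<in> commutant P (diag_alg P)"
  shows "\<exists>g. (\<exists>C. \<forall>t\<in>P. cmod (g t) \<le> C) \<and> (\<forall>f\<in>l2 P. M f = mult_op g f)"
proof -
  have cone: "P \<inter> uminus ` P = {0}"
    using assms(1) by (simp add: quasi_lattice_ordered_def)
  have Mb: "bounded_op P M" using assms(2) by (simp add: commutant_def)
  define g where "g t = M (unit_vec t) t" for t
  have "\<forall>f\<in>l2 P. M f = mult_op g f"
    using bounded_op_diagonal_is_mult_op[OF Mb commutant_diag_alg_diagonal[OF cone assms(2)]]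
    unfolding g_def by blast
  moreover have "\<exists>C. \<forall>t\<in>P. cmod (g t) \<le> C"
    using bounded_op_diagonal_bounded[OF Mb] unfolding g_def .
  ultimately show ?thesis by blast
qed

end
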